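(* Let $d\ge 3$, let $\Delta$ be a shellable simplicial $(d-1)$-sphere, and let $G$ be its facet-ridge graph. Then $G$ has a good acyclic orientation.
   Context: $\Delta$ is a simplicial complex whose geometric realization is homeomorphic to the $(d-1)$-sphere; its facets are its maximal faces ($d$ elements each), and ridges are faces with $d-1$ elements. The facet-ridge graph $G$ has the facets as vertices, two facets adjacent iff they share a ridge. Shelling: a total ordering $T_1,\dots,T_n$ of the facets such that for each $2\le i\le n$, $\overline{T}_i\cap(\overline{T}_1\cup\cdots\cup\overline{T}_{i-1})$ is pure $(d-2)$-dimensional, where $\overline{T}$ is the set of all subsets of $T$; $\Delta$ is shellable if a shelling exists. For $0\le k\le d$ and a face $\sigma$ of dimension $d-k-1$ (i.e., $|\sigma|=d-k$; the empty face has dimension $-1$), let $\mathcal{V}^\Delta_k(\sigma)$ be the set of vertices of $G$ corresponding to facets of $\Delta$ containing $\sigma$, and $G[W]$ the induced subgraph on $W$. An orientation $\mathcal{O}$ of $G$ is good if for every $0\le k\le d$ and every $(d-k-1)$-dimensional face $\sigma$, the orientation induced by $\mathcal{O}$ on $G[\mathcal{V}^\Delta_k(\sigma)]$ has exactly one sink (vertex with no outgoing edge within that subgraph). It is acyclic if it has no directed cycle. *)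

theory Defs
  imports "HOL-Analysis.Analysis"
begin

definition simplicial_complex :: "'a set set \<Rightarrow> bool" where
  "simplicial_complex \<Delta> \<longleftrightarrow> finite \<Delta> \<and> \<Delta> \<noteq> {} \<and> (\<forall>F\<in>\<Delta>. finite F) \<and>
     (\<forall>F\<in>\<Delta>. \<forall>G. G \<subseteq> F \<longrightarrow> G \<in> \<Delta>)"

definition geometric_realization :: "'a set set \<Rightarrow> ('a \<Rightarrow> real) set" where
  "geometric_realization \<Delta> = {x. \<exists>\<sigma>\<in>\<Delta>. (\<forall>v. v \<notin> \<sigma> \<longrightarrow> x v = 0) \<and> (\<forall>v. 0 \<le> x v) \<and> (\<Sum>v\<in>\<sigma>. x v) = 1}"

definition realization_topology :: "'a set set \<Rightarrow> ('a \<Rightarrow> real) topology" where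
  "realization_topology \<Delta> = subtopology (product_topology (\<lambda>i. euclideanreal) UNIV) (geometric_realization \<Delta>)"

definition simplicial_sphere :: "'a set set \<Rightarrow> nat \<Rightarrow> bool" where
  "simplicial_sphere \<Delta> d \<longleftrightarrow> simplicial_complex \<Delta> \<and> 1 \<le> d \<and>
     realization_topology \<Delta> homeomorphic_space nsphere (d - 1)"

definition facets :: "'a set set \<Rightarrow> 'a set set" where
  "facets \<Delta> = {F\<in>\<Delta>. \<forall>G\<in>\<Delta>. F \<subseteq> G \<longrightarrow> G = F}"

text \<open>A complex K is pure of dimension k: all its maximal faces have k+1 elements
  (here stated with the number of elements m = k+1).\<close>
definition pure_card :: "'a set set \<Rightarrow> nat \<Rightarrow> bool" where
  "pure_card K m \<longleftrightarrow> (\<forall>F\<in>facets K. card F = m)"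

definition shelling :: "'a set set \<Rightarrow> nat \<Rightarrow> 'a set list \<Rightarrow> bool" where
  "shelling \<Delta> d ts \<longleftrightarrow> distinct ts \<and> set ts = facets \<Delta> \<and>
     (\<forall>i. 1 \<le> i \<and> i < length ts \<longrightarrow>
        pure_card (Pow (ts ! i) \<inter> (\<Union>j<i. Pow (ts ! j))) (d - 1))"

definition shellable :: "'a set set \<Rightarrow> nat \<Rightarrow> bool" where
  "shellable \<Delta> d \<longleftrightarrow> (\<exists>ts. shelling \<Delta> d ts)"

definition fr_adj :: "'a set set \<Rightarrow> nat \<Rightarrow> 'a set \<Rightarrow> 'a set \<Rightarrow> bool" where
  "fr_adj \<Delta> d F F' \<longleftrightarrow> F \<in> facets \<Delta> \<and> F' \<in> facets \<Delta> \<and> F \<noteq> F' \<and>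
     (\<exists>R\<in>\<Delta>. card R = d - 1 \<and> R \<subseteq> F \<and> R \<subseteq> F')"

definition orientation :: "'a set set \<Rightarrow> nat \<Rightarrow> ('a set \<times> 'a set) set \<Rightarrow> bool" where
  "orientation \<Delta> d Ori \<longleftrightarrow> (\<forall>(F,F')\<in>Ori. fr_adj \<Delta> d F F') \<and>
     (\<forall>F F'. fr_adj \<Delta> d F F' \<longrightarrow> ((F,F') \<in> Ori \<longleftrightarrow> (F',F) \<notin> Ori))"

definition star_facets :: "'a set set \<Rightarrow> 'a set \<Rightarrow> 'a set set" where
  "star_facets \<Delta> \<sigma> = {F\<in>facets \<Delta>. \<sigma> \<subseteq> F}"

definition good_orientation :: "'a set set \<Rightarrow> nat \<Rightarrow> ('a set \<times> 'a set) set \<Rightarrow> bool" where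
  "good_orientation \<Delta> d Ori \<longleftrightarrow> orientation \<Delta> d Ori \<and>
     (\<forall>k\<le>d. \<forall>\<sigma>\<in>\<Delta>. card \<sigma> = d - k \<longrightarrow>
        (\<exists>!F. F \<in> star_facets \<Delta> \<sigma> \<and> (\<forall>F'\<in>star_facets \<Delta> \<sigma>. (F,F') \<notin> Ori)))"

end

theory Submission
  imports Defs
begin

text \<open>Rank the facets by their position in a shelling and orient every edge of the
  facet-ridge graph from the later facet to the earlier one. This is acyclic because
  the rank strictly decreases along arcs. For a face \<sigma>, the first facet containing
  \<sigma> is a sink of the star of \<sigma>; every later facet F containing \<sigma> is not, since
  by the shelling condition \<sigma> lies in a ridge of F shared with an earlier facet.\<close>

definition rank_orientation ::
    "'a set set \<Rightarrow> nat \<Rightarrow> ('a set \<Rightarrow> nat) \<Rightarrow> ('a set \<times> 'a set) set" where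
  "rank_orientation \<Delta> d r = {(F, F'). fr_adj \<Delta> d F F' \<and> r F' < r F}"

definition shelling_rank :: "'a set list \<Rightarrow> 'a set \<Rightarrow> nat" where
  "shelling_rank ts = the_inv_into {..<length ts} ((!) ts)"

lemma ex_facet_superset:
  assumes "finite K" "\<sigma> \<in> K"
  shows "\<exists>F\<in>facets K. \<sigma> \<subseteq> F"
  using finite_has_maximal2[OF assms] unfolding facets_def by blast

lemma fr_adj_sym: "fr_adj \<Delta> d F F' \<Longrightarrow> fr_adj \<Delta> d F' F"
  unfolding fr_adj_def by blast

lemma orientation_rank_orientation:
  assumes "inj_on r (facets \<Delta>)"
  shows "orientation \<Delta> d (rank_orientation \<Delta> d r)"
proof -
  have "r F < r F' \<or> r F' < r F" if "fr_adj \<Delta> d F F'" for F F'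
  proof -
    have "r F \<noteq> r F'"
      using that assms unfolding fr_adj_def inj_on_def by blast
    then show ?thesis by linarith
  qed
  then show ?thesis
    unfolding orientation_def rank_orientation_def
    by (auto dest: fr_adj_sym)
qed

lemma acyclic_rank_orientation: "acyclic (rank_orientation \<Delta> d r)"
proof -
  have "(rank_orientation \<Delta> d r)\<inverse> \<subseteq> inv_image less_than r"
    unfolding rank_orientation_def by auto
  then have "wf ((rank_orientation \<Delta> d r)\<inverse>)"
    using wf_subset wf_inv_image wf_less_than by blast
  then show ?thesis
    using wf_acyclic acyclic_converse by blast
qed

lemma good_orientation_rank_orientation:
  assumes sc: "simplicial_complex \<Delta>"
    and inj: "inj_on r (facets \<Delta>)"
    and descent: "\<And>\<sigma> F F'. \<sigma> \<in> \<Delta> \<Longrightarrow> F \<in> star_facets \<Delta> \<sigma> \<Longrightarrow> F' \<in> star_facets \<Delta> \<sigma> \<Longrightarrow>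
        r F' < r F \<Longrightarrow> \<exists>F''\<in>star_facets \<Delta> \<sigma>. fr_adj \<Delta> d F F'' \<and> r F'' < r F"
  shows "good_orientation \<Delta> d (rank_orientation \<Delta> d r)"
proof -
  let ?Ori = "rank_orientation \<Delta> d r"
  have "\<exists>!F. F \<in> star_facets \<Delta> \<sigma> \<and> (\<forall>F'\<in>star_facets \<Delta> \<sigma>. (F, F') \<notin> ?Ori)"
    if \<sigma>: "\<sigma> \<in> \<Delta>" for \<sigma>
  proof -
    have "finite \<Delta>" using sc unfolding simplicial_complex_def by blast
    then obtain F where "F \<in> star_facets \<Delta> \<sigma>"
      using ex_facet_superset[OF _ \<sigma>] unfolding star_facets_def by blast
    then obtain F0 where F0: "F0 \<in> star_facets \<Delta> \<sigma>"
      and least: "\<And>F. F \<in> star_facets \<Delta> \<sigma> \<Longrightarrow> r F0 \<le> r F"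
      using ex_has_least_nat[of "\<lambda>F. F \<in> star_facets \<Delta> \<sigma>" F r] by blast
    have sink: "\<forall>F'\<in>star_facets \<Delta> \<sigma>. (F0, F') \<notin> ?Ori"
      using least unfolding rank_orientation_def by (auto simp: not_less)
    have "F = F0"
      if F: "F \<in> star_facets \<Delta> \<sigma>" and no_arc: "\<forall>F'\<in>star_facets \<Delta> \<sigma>. (F, F') \<notin> ?Ori" for F
    proof (rule ccontr)
      assume "F \<noteq> F0"
      with F F0 inj have "r F0 < r F"
        using least[OF F] unfolding star_facets_def inj_on_def by fastforce
      then obtain F'' where "F'' \<in> star_facets \<Delta> \<sigma>" "(F, F'') \<in> ?Ori"
        using descent[OF \<sigma> F F0] unfolding rank_orientation_def by blast
      with no_arc show False by blast
    qed
    with F0 sink show ?thesis by blast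
  qed
  then show ?thesis
    unfolding good_orientation_def using orientation_rank_orientation[OF inj] by blast
qed

lemma shelling_earlier_neighbour:
  assumes sc: "simplicial_complex \<Delta>" and sh: "shelling \<Delta> d ts"
    and ij: "i < j" "j < length ts" and \<sigma>: "\<sigma> \<subseteq> ts ! i" "\<sigma> \<subseteq> ts ! j"
  shows "\<exists>i'<j. \<sigma> \<subseteq> ts ! i' \<and> fr_adj \<Delta> d (ts ! j) (ts ! i')"
proof -
  define K where "K = Pow (ts ! j) \<inter> (\<Union>i<j. Pow (ts ! i))"
  have facet: "k < length ts \<Longrightarrow> ts ! k \<in> facets \<Delta>" for k
    using sh unfolding shelling_def by auto
  have "ts ! j \<in> \<Delta>" using facet[OF ij(2)] unfolding facets_def by blast
  then have "finite K"
    using sc unfolding K_def simplicial_complex_def by auto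
  moreover have "\<sigma> \<in> K" unfolding K_def using ij \<sigma> by auto
  ultimately obtain R where R: "R \<in> facets K" "\<sigma> \<subseteq> R"
    using ex_facet_superset by blast
  have "pure_card K (d - 1)"
    using sh ij unfolding shelling_def K_def by simp
  then have "card R = d - 1"
    using R(1) unfolding pure_card_def by blast
  moreover obtain i' where i': "i' < j" "R \<subseteq> ts ! i'" "R \<subseteq> ts ! j"
    using R(1) unfolding facets_def K_def by blast
  moreover have "R \<in> \<Delta>"
    using sc \<open>ts ! j \<in> \<Delta>\<close> i'(3) unfolding simplicial_complex_def by blast
  moreover have "ts ! j \<noteq> ts ! i'"
    using sh ij i' unfolding shelling_def by (simp add: nth_eq_iff_index_eq)
  moreover have "ts ! j \<in> facets \<Delta>" "ts ! i' \<in> facets \<Delta>"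
    using facet ij i'(1) by simp_all
  ultimately have "fr_adj \<Delta> d (ts ! j) (ts ! i')"
    unfolding fr_adj_def by blast
  then show ?thesis using i' R(2) by blast
qed

lemma bij_betw_nth_shelling:
  "shelling \<Delta> d ts \<Longrightarrow> bij_betw ((!) ts) {..<length ts} (facets \<Delta>)"
  unfolding shelling_def by (simp add: bij_betw_nth)

lemma inj_on_shelling_rank:
  "shelling \<Delta> d ts \<Longrightarrow> inj_on (shelling_rank ts) (facets \<Delta>)"
  unfolding shelling_rank_def
  using bij_betw_nth_shelling bij_betw_the_inv_into bij_betw_imp_inj_on by blast

lemma shelling_rank_descent:
  assumes sc: "simplicial_complex \<Delta>" and sh: "shelling \<Delta> d ts"
    and F: "F \<in> star_facets \<Delta> \<sigma>" and F': "F' \<in> star_facets \<Delta> \<sigma>"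
    and less: "shelling_rank ts F' < shelling_rank ts F"
  shows "\<exists>F''\<in>star_facets \<Delta> \<sigma>. fr_adj \<Delta> d F F'' \<and> shelling_rank ts F'' < shelling_rank ts F"
proof -
  have bij: "bij_betw ((!) ts) {..<length ts} (facets \<Delta>)"
    using bij_betw_nth_shelling[OF sh] .
  have rank: "k < length ts \<Longrightarrow> shelling_rank ts (ts ! k) = k" for k
    unfolding shelling_rank_def using bij by (simp add: bij_betw_def the_inv_into_f_f)
  have "F \<in> set ts" "F' \<in> set ts"
    using F F' sh unfolding star_facets_def shelling_def by auto
  then obtain j i where j: "j < length ts" "F = ts ! j" and i: "i < length ts" "F' = ts ! i"
    by (metis in_set_conv_nth)
  have "i < j" using less rank i j by simp
  then obtain i' where i': "i' < j" "\<sigma> \<subseteq> ts ! i'" "fr_adj \<Delta> d (ts ! j) (ts ! i')"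
    using shelling_earlier_neighbour[OF sc sh _ j(1)] F F' i j
    unfolding star_facets_def by blast
  have "ts ! i' \<in> star_facets \<Delta> \<sigma>"
    using i'(2,3) unfolding star_facets_def fr_adj_def by blast
  moreover have "shelling_rank ts (ts ! i') < shelling_rank ts F"
    using rank i'(1) j by simp
  ultimately show ?thesis using i'(3) j(2) by blast
qed

theorem proposition3p1:
  fixes \<Delta> :: "'a set set" and d :: nat
  assumes "3 \<le> d"
    and "simplicial_sphere \<Delta> d"
    and "shellable \<Delta> d"
  shows "\<exists>Ori. good_orientation \<Delta> d Ori \<and> acyclic Ori"
proof -
  have sc: "simplicial_complex \<Delta>"
    using assms(2) unfolding simplicial_sphere_def by blast
  obtain ts where sh: "shelling \<Delta> d ts"
    using assms(3) unfolding shellable_def by blast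
  have "good_orientation \<Delta> d (rank_orientation \<Delta> d (shelling_rank ts))"
    by (rule good_orientation_rank_orientation[OF sc inj_on_shelling_rank[OF sh]],
        rule shelling_rank_descent[OF sc sh])
  then show ?thesis
    using acyclic_rank_orientation by blast
qed

end
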